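(* For every $n\geq 2$, $B_d^t(F_n)=1$.
   Context: A total dominator coloring (TD-coloring) of a graph $G$ with no isolated vertex is a proper vertex coloring of $G$ in which every vertex is adjacent to every vertex of some color class. The total dominator chromatic number $\chi_d^t(G)$ is the minimum number of colors in a TD-coloring of $G$. The TDC-bondage number $B_d^t(G)$ is the minimum number of edges of $G$ whose removal changes the total dominator chromatic number of $G$. The friendship graph $F_n$ ($n\ge2$) is obtained by joining $n$ copies of the cycle $C_3$ at a common vertex. *)

theory Defs
  imports Main
begin

definition simple_graph :: "'a set \<Rightarrow> 'a set set \<Rightarrow> bool" where
  "simple_graph V E \<longleftrightarrow> finite V \<and> (\<forall>e\<in>E. e \<subseteq> V \<and> card e = 2)"

definition adj :: "'a set set \<Rightarrow> 'a \<Rightarrow> 'a \<Rightarrow> bool" where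
  "adj E u v \<longleftrightarrow> {u, v} \<in> E"

definition no_isolated :: "'a set \<Rightarrow> 'a set set \<Rightarrow> bool" where
  "no_isolated V E \<longleftrightarrow> (\<forall>v\<in>V. \<exists>u\<in>V. adj E v u)"

definition color_class :: "'a set \<Rightarrow> ('a \<Rightarrow> nat) \<Rightarrow> nat \<Rightarrow> 'a set" where
  "color_class V c i = {u\<in>V. c u = i}"

definition td_coloring :: "'a set \<Rightarrow> 'a set set \<Rightarrow> ('a \<Rightarrow> nat) \<Rightarrow> bool" where
  "td_coloring V E c \<longleftrightarrow>
     (\<forall>u\<in>V. \<forall>v\<in>V. adj E u v \<longrightarrow> c u \<noteq> c v) \<and>
     (\<forall>v\<in>V. \<exists>i\<in>c ` V. \<forall>u\<in>color_class V c i. adj E v u)"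

definition td_chromatic :: "'a set \<Rightarrow> 'a set set \<Rightarrow> nat" where
  "td_chromatic V E = (LEAST k. \<exists>c. td_coloring V E c \<and> card (c ` V) = k)"

text \<open>TDC-bondage number: least number of edges whose removal (leaving a graph
without isolated vertices, so that the parameter is defined) changes the total
dominator chromatic number.\<close>
definition tdc_bondage :: "'a set \<Rightarrow> 'a set set \<Rightarrow> nat" where
  "tdc_bondage V E = (LEAST k. \<exists>F\<subseteq>E. card F = k \<and> no_isolated V (E - F) \<and>
       td_chromatic V (E - F) \<noteq> td_chromatic V E)"

text \<open>Friendship graph F_n: centre 0, triangles {0, 2i-1, 2i} for i = 1..n.\<close>
definition friendship_V :: "nat \<Rightarrow> nat set" where
  "friendship_V n = {0..2*n}"

definition friendship_E :: "nat \<Rightarrow> nat set set" where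
  "friendship_E n = {{0, j} | j. j \<in> {1..2*n}} \<union> {{2*i - 1, 2*i} | i. i \<in> {1..n}}"

end

theory Submission
  imports Defs
begin

text \<open>The colouring by centre / odd / even vertices is a TD-colouring of \<open>F\<^sub>n\<close> with three
colours. After deleting the spoke \<open>{0,1}\<close>, vertex 1 has the single neighbour 2, so in any
TD-colouring the colour of 2 is used by 2 alone; together with the triangle \<open>0,3,4\<close> this
forces four colours.\<close>

lemma adj_irrefl:
  assumes "\<forall>e\<in>E. card e = 2" "adj E u v"
  shows "u \<noteq> v"
  using assms by (auto simp: adj_def)

lemma adj_Diff_singleton_iff: "adj (E - {e}) u v \<longleftrightarrow> adj E u v \<and> {u, v} \<noteq> e"
  by (simp add: adj_def)

lemma td_chromatic_le:
  assumes "td_coloring V E c"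
  shows "td_chromatic V E \<le> card (c ` V)"
  unfolding td_chromatic_def using assms by (intro Least_le) blast

lemma td_chromatic_ge:
  assumes "td_coloring V E c\<^sub>0"
    and "\<And>c. td_coloring V E c \<Longrightarrow> k \<le> card (c ` V)"
  shows "k \<le> td_chromatic V E"
proof -
  let ?P = "\<lambda>k. \<exists>c. td_coloring V E c \<and> card (c ` V) = k"
  have "?P (LEAST k. ?P k)"
    by (rule LeastI_ex) (use assms(1) in blast)
  then obtain c where c: "td_coloring V E c" "card (c ` V) = td_chromatic V E"
    unfolding td_chromatic_def by blast
  show ?thesis
    using assms(2)[OF c(1)] c(2) by simp
qed

lemma td_coloring_id:
  assumes "\<forall>e\<in>E. card e = 2" "no_isolated V E"
  shows "td_coloring V E id"
  unfolding td_coloring_def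
proof (intro conjI ballI impI)
  fix u v assume "adj E u v"
  then show "id u \<noteq> id v" using adj_irrefl[OF assms(1)] by simp
next
  fix v assume "v \<in> V"
  then obtain w where "w \<in> V" "adj E v w"
    using assms(2) by (auto simp: no_isolated_def)
  moreover have "color_class V id w \<subseteq> {w}"
    by (auto simp: color_class_def)
  ultimately show "\<exists>i\<in>id ` V. \<forall>u\<in>color_class V id i. adj E v u"
    by (metis id_apply image_eqI singletonD subsetD)
qed

text \<open>A vertex with a single neighbour \<open>w\<close> can only be totally dominated by the class of \<open>w\<close>.\<close>

lemma td_coloring_pendant_class:
  assumes td: "td_coloring V E c" and "v \<in> V"
    and pendant: "\<And>u. adj E v u \<Longrightarrow> u = w"
    and "u \<in> V" "c u = c w"
  shows "u = w"
proof -
  obtain x where "x \<in> V" and dom: "\<forall>y\<in>color_class V c (c x). adj E v y"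
    using td \<open>v \<in> V\<close> by (auto simp: td_coloring_def)
  then have "x = w"
    using pendant by (simp add: color_class_def)
  with dom \<open>u \<in> V\<close> \<open>c u = c w\<close> have "adj E v u"
    by (simp add: color_class_def)
  then show ?thesis by (rule pendant)
qed

lemma tdc_bondage_eq_1I:
  assumes "finite E" "e \<in> E" "no_isolated V (E - {e})"
    and "td_chromatic V (E - {e}) \<noteq> td_chromatic V E"
  shows "tdc_bondage V E = 1"
  unfolding tdc_bondage_def
proof (rule Least_equality)
  show "\<exists>F\<subseteq>E. card F = 1 \<and> no_isolated V (E - F) \<and> td_chromatic V (E - F) \<noteq> td_chromatic V E"
    using assms by (intro exI[of _ "{e}"]) simp
next
  fix k assume "\<exists>F\<subseteq>E. card F = k \<and> no_isolated V (E - F) \<and> td_chromatic V (E - F) \<noteq> td_chromatic V E"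
  then obtain F where F: "F \<subseteq> E" "card F = k" "td_chromatic V (E - F) \<noteq> td_chromatic V E"
    by blast
  then have "F \<noteq> {}" by force
  moreover have "finite F" using F(1) \<open>finite E\<close> by (rule finite_subset)
  ultimately have "card F \<noteq> 0" by simp
  then show "1 \<le> k" using F(2) by simp
qed

lemma friendship_E_finite: "finite (friendship_E n)"
  unfolding friendship_E_def by (auto simp: setcompr_eq_image)

lemma friendship_E_card_2: "\<forall>e\<in>friendship_E n. card e = 2"
  unfolding friendship_E_def by auto

lemma adj_friendship_iff:
  "adj (friendship_E n) u v \<longleftrightarrow>
     (u = 0 \<and> v \<in> {1..2*n}) \<or> (v = 0 \<and> u \<in> {1..2*n}) \<or>
     (u \<in> {1..2*n} \<and> v \<in> {1..2*n} \<and> (odd u \<and> v = u + 1 \<or> odd v \<and> u = v + 1))"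
  (is "?lhs \<longleftrightarrow> ?rhs")
proof
  assume ?lhs
  then obtain j i where "({u,v} = {0,j} \<and> j \<in> {1..2*n}) \<or> ({u,v} = {2*i-1, 2*i} \<and> i \<in> {1..n})"
    unfolding adj_def friendship_E_def by auto
  then show ?rhs
  proof
    assume "{u,v} = {0,j} \<and> j \<in> {1..2*n}"
    then show ?rhs by (auto simp: doubleton_eq_iff)
  next
    assume h: "{u,v} = {2*i-1, 2*i} \<and> i \<in> {1..n}"
    then obtain k where "i = Suc k" by (cases i) auto
    with h show ?rhs by (auto simp: doubleton_eq_iff)
  qed
next
  have pair: "{u, u + 1} \<in> friendship_E n" if "u \<in> {1..2*n}" "odd u" for u
  proof -
    obtain k where "u = 2*k + 1" using \<open>odd u\<close> oddE by blast
    then have "{u, u+1} = {2*(k+1) - 1, 2*(k+1)}" "k + 1 \<in> {1..n}" using that by auto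
    then show ?thesis unfolding friendship_E_def by blast
  qed
  have spoke: "{0, v} \<in> friendship_E n" if "v \<in> {1..2*n}" for v
    using that unfolding friendship_E_def by blast
  assume ?rhs
  then consider "u = 0" "v \<in> {1..2*n}" | "v = 0" "u \<in> {1..2*n}"
    | "u \<in> {1..2*n}" "odd u" "v = u + 1" | "v \<in> {1..2*n}" "odd v" "u = v + 1"
    by blast
  then show ?lhs
  proof cases
    case 2
    then show ?thesis using spoke[of u] by (simp add: adj_def insert_commute)
  next
    case 3
    then show ?thesis using pair[of u] by (simp add: adj_def)
  next
    case 4
    then show ?thesis using pair[of v] by (simp add: adj_def insert_commute)
  qed (simp add: adj_def spoke)
qed

lemma td_chromatic_friendship_le_3:
  assumes "n \<ge> 1"
  shows "td_chromatic (friendship_V n) (friendship_E n) \<le> 3"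
proof -
  define c where "c v = (if v = 0 then 0 else if odd v then 1 else 2 :: nat)" for v :: nat
  have proper: "c u \<noteq> c v" if "adj (friendship_E n) u v" for u v
    using that unfolding adj_friendship_iff
    by (elim disjE conjE) (simp_all add: c_def)
  \<comment> \<open>the centre is dominated by the odd class, every other vertex by the class \<open>{0}\<close>\<close>
  have dominated: "\<forall>u\<in>color_class (friendship_V n) c (c w). adj (friendship_E n) v u"
    if "v \<in> friendship_V n" "w = (if v = 0 then 1 else 0)" for v w
  proof
    fix u assume "u \<in> color_class (friendship_V n) c (c w)"
    then have "u \<in> friendship_V n" "c u = c w" by (auto simp: color_class_def)
    with that show "adj (friendship_E n) v u"
      unfolding adj_friendship_iff friendship_V_def c_def
      by (cases "v = 0"; cases "u = 0") (simp_all split: if_splits)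
  qed
  have "(if v = 0 then 1 else 0) \<in> friendship_V n" for v
    using assms by (simp add: friendship_V_def)
  with proper dominated have "td_coloring (friendship_V n) (friendship_E n) c"
    unfolding td_coloring_def by blast
  moreover have "card (c ` friendship_V n) \<le> 3"
  proof -
    have "c ` friendship_V n \<subseteq> {0, 1, 2}" by (auto simp: c_def)
    from card_mono[OF _ this] show ?thesis by simp
  qed
  ultimately show ?thesis
    using td_chromatic_le le_trans by blast
qed

lemma no_isolated_friendship_minus_spoke:
  assumes "n \<ge> 1"
  shows "no_isolated (friendship_V n) (friendship_E n - {{0,1}})"
  unfolding no_isolated_def
proof
  fix v assume "v \<in> friendship_V n"
  then have "adj (friendship_E n - {{0,1}}) v (if v \<in> {0,1} then 2 else 0)"
    using assms by (auto simp: adj_Diff_singleton_iff adj_friendship_iff doubleton_eq_iff friendship_V_def)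
  moreover have "(if v \<in> {0,1} then 2 else 0) \<in> friendship_V n"
    using assms by (simp add: friendship_V_def)
  ultimately show "\<exists>u\<in>friendship_V n. adj (friendship_E n - {{0,1}}) v u" by blast
qed

lemma td_chromatic_friendship_minus_spoke_ge_4:
  assumes "n \<ge> 2"
  shows "4 \<le> td_chromatic (friendship_V n) (friendship_E n - {{0,1}})"
proof (rule td_chromatic_ge)
  let ?V = "friendship_V n" and ?E = "friendship_E n - {{0,1}}"
  show "td_coloring ?V ?E id"
    using friendship_E_card_2 no_isolated_friendship_minus_spoke assms
    by (intro td_coloring_id) auto
  fix c assume td: "td_coloring ?V ?E c"
  have V: "0 \<in> ?V" "1 \<in> ?V" "2 \<in> ?V" "3 \<in> ?V" "4 \<in> ?V"
    using assms by (auto simp: friendship_V_def)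
  have adj: "adj ?E 0 2" "adj ?E 0 3" "adj ?E 0 4" "adj ?E 3 4"
    using assms by (auto simp: adj_Diff_singleton_iff adj_friendship_iff doubleton_eq_iff)
  have "\<And>u. adj ?E 1 u \<Longrightarrow> u = 2"
    by (auto simp: adj_Diff_singleton_iff adj_friendship_iff doubleton_eq_iff)
  then have "c 3 \<noteq> c 2" "c 4 \<noteq> c 2"
    using td_coloring_pendant_class[OF td V(2)] V by fastforce+
  moreover have "c 0 \<noteq> c 2" "c 0 \<noteq> c 3" "c 0 \<noteq> c 4" "c 3 \<noteq> c 4"
    using td adj V by (auto simp: td_coloring_def)
  ultimately have "card {c 0, c 2, c 3, c 4} = 4" by auto
  moreover have "{c 0, c 2, c 3, c 4} \<subseteq> c ` ?V" using V by auto
  then have "card {c 0, c 2, c 3, c 4} \<le> card (c ` ?V)"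
    by (rule card_mono[rotated]) (simp add: friendship_V_def)
  ultimately show "4 \<le> card (c ` ?V)" by simp
qed

theorem mainTheorem14:
  fixes n :: nat
  assumes "n \<ge> 2"
  shows "tdc_bondage (friendship_V n) (friendship_E n) = 1"
proof (rule tdc_bondage_eq_1I)
  show "finite (friendship_E n)" by (rule friendship_E_finite)
  show "{0,1} \<in> friendship_E n"
    using assms adj_friendship_iff[of n 0 1] by (simp add: adj_def)
  show "no_isolated (friendship_V n) (friendship_E n - {{0,1}})"
    using assms by (intro no_isolated_friendship_minus_spoke) simp
  show "td_chromatic (friendship_V n) (friendship_E n - {{0,1}}) \<noteq> td_chromatic (friendship_V n) (friendship_E n)"
    using td_chromatic_friendship_minus_spoke_ge_4[OF assms] td_chromatic_friendship_le_3[of n] assms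
    by simp
qed

end
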